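(* Let $0\le\alpha\le1/4$, $\beta=(1-4\alpha)/2$, and let $\mathbf P_\alpha$ be the corner/stick law on $\mathbb Z^2$. If $1/8\le\alpha\le1/4$, then for every $A\subseteq\mathcal N_o$, $$\mathbf P_{1/2}[N(o)\cap A\neq\emptyset]\le \mathbf P_\alpha[N(o)\cap A\neq\emptyset],$$ where $\mathbf P_{1/2}$ is the local i.i.d. law with parameter $1/2$. Consequently $\mathbb P_{1/2}[o\rightsquigarrow\partial B_n]\le\mathbb P_\alpha[o\rightsquigarrow\partial B_n]$ for all $n$.
   Context: On $\mathbb Z^2$, $\mathcal N_o=\{\text{north},\text{south},\text{east},\text{west}\}$ (the four unit vectors). The corner/stick law $\mathbf P_\alpha$ is the law of a random 2-element subset $N(o)\subseteq\mathcal N_o$ that equals each of the four "corner" pairs $\{$north,east$\}$, $\{$north,west$\}$, $\{$south,east$\}$, $\{$south,west$\}$ with probability $\alpha$ and each of the two "stick" pairs $\{$north,south$\}$, $\{$east,west$\}$ with probability $\beta$, where $4\alpha+2\beta=1$. $\mathbf P_{1/2}$: each element of $\mathcal N_o$ is included independently with probability $1/2$. $\mathbb P_\alpha,\mathbb P_{1/2}$ are the product laws on $\mathbb Z^2$ (each vertex $u$ independently samples its translated set $N(u)$), defining a directed graph with edges $(u,v)$, $v\in N(u)$; $B_n=\{x:\|x\|_1\le n\}$, $\partial B_n=B_{n+1}\setminus B_n$, and $\{o\rightsquigarrow\partial B_n\}$ is the event that a directed path from the origin reaches $\partial B_n$. *)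

theory Defs
  imports "HOL-Probability.Probability"
begin

datatype dir = North | South | East | West

lemma UNIV_dir: "(UNIV :: dir set) = {North, South, East, West}"
  by (auto intro: dir.exhaust)

definition dir_vec :: "dir \<Rightarrow> int \<times> int" where
  "dir_vec d = (case d of North \<Rightarrow> (0, 1) | South \<Rightarrow> (0, -1)
                 | East \<Rightarrow> (1, 0) | West \<Rightarrow> (-1, 0))"

definition corner_pairs :: "dir set set" where
  "corner_pairs = {{North, East}, {North, West}, {South, East}, {South, West}}"

definition stick_pairs :: "dir set set" where
  "stick_pairs = {{North, South}, {East, West}}"

text \<open>Corner/stick law P_alpha on subsets of the four neighbours of the origin,
  with beta = (1 - 4 alpha)/2 (meaningful for 0 \<le> alpha \<le> 1/4).\<close>
definition corner_stick :: "real \<Rightarrow> dir set pmf" where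
  "corner_stick \<alpha> = embed_pmf (\<lambda>S. if S \<in> corner_pairs then \<alpha>
        else if S \<in> stick_pairs then (1 - 4 * \<alpha>) / 2 else 0)"

definition iid_law :: "real \<Rightarrow> dir set pmf" where
  "iid_law p = map_pmf (\<lambda>b. {d. b d}) (Pi_pmf UNIV False (\<lambda>_. bernoulli_pmf p))"

text \<open>Product law on Z^2: configurations assign to each vertex u its set N(u)
  (of directions; the out-neighbours are u + dir_vec d).\<close>
definition product_law :: "dir set pmf \<Rightarrow> ((int \<times> int) \<Rightarrow> dir set) measure" where
  "product_law P = PiM UNIV (\<lambda>_. measure_pmf P)"

definition edge :: "((int \<times> int) \<Rightarrow> dir set) \<Rightarrow> int \<times> int \<Rightarrow> int \<times> int \<Rightarrow> bool" where
  "edge \<omega> u v \<longleftrightarrow> (\<exists>d \<in> \<omega> u. v = u + dir_vec d)"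

definition l1norm :: "int \<times> int \<Rightarrow> int" where
  "l1norm x = \<bar>fst x\<bar> + \<bar>snd x\<bar>"

text \<open>B_n = {x. |x|_1 \<le> n}; boundary = B_{n+1} - B_n = {x. |x|_1 = n+1}.\<close>
definition boundary :: "nat \<Rightarrow> (int \<times> int) set" where
  "boundary n = {x. l1norm x = int n + 1}"

definition reaches_boundary :: "nat \<Rightarrow> ((int \<times> int) \<Rightarrow> dir set) set" where
  "reaches_boundary n = {\<omega>. \<exists>v \<in> boundary n. (edge \<omega>)\<^sup>*\<^sup>* (0, 0) v}"

end

theory Submission
  imports Defs
begin

(* Put B = -A. Under the fair i.i.d. law P[N(o) \<subseteq> B] = 2^|B|/16, whereas under the
   corner/stick law it is 1, 2\<alpha> + \<beta> = 1/2, \<alpha> or \<beta>, 0, 0 for |B| = 4, 3, 2, 1, 0;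
   so the local inequality amounts to \<alpha> \<le> 1/4 and \<beta> \<le> 1/4, i.e. \<alpha> \<ge> 1/8.

   The event {o \<leadsto> \<partial>B_n} depends only on the sets N(u) with u \<in> B_n, and as a function
   of a single N(u) it is either certain or of the form {N(u) \<inter> A \<noteq> {}}: A is the set of
   directions d such that, with N(u) emptied, o reaches u and u + d reaches \<partial>B_n.
   Replacing the law of N(u) by the corner/stick law one site of B_n at a time can
   therefore only increase the probability of the event. *)

lemma emeasure_Pi_pmf_insert:
  assumes "finite I" "x \<notin> I"
  shows "emeasure (Pi_pmf (insert x I) d p) E
           = (\<integral>\<^sup>+y. emeasure (Pi_pmf I d p) {f. f(x := y) \<in> E} \<partial>p x)"
  using assms by (simp add: Pi_pmf_insert' map_pmf_def[symmetric] vimage_def)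

lemma nn_integral_emeasure_fun_upd_swap:
  fixes r :: "'v pmf" and s :: "('k \<Rightarrow> 'v) pmf"
  shows "(\<integral>\<^sup>+y. emeasure s {f. f(x := y) \<in> E} \<partial>r)
           = (\<integral>\<^sup>+f. emeasure r {y. f(x := y) \<in> E} \<partial>s)"
proof -
  have "bind_pmf r (\<lambda>y. map_pmf (\<lambda>f. f(x := y)) s)
          = bind_pmf s (\<lambda>f. map_pmf (\<lambda>y. f(x := y)) r)"
    by (simp add: map_pmf_def bind_commute_pmf[of r])
  then have "emeasure (bind_pmf r (\<lambda>y. map_pmf (\<lambda>f. f(x := y)) s)) E
          = emeasure (bind_pmf s (\<lambda>f. map_pmf (\<lambda>y. f(x := y)) r)) E"
    by (rule arg_cong)
  then show ?thesis
    by (simp add: vimage_def)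
qed

definition sections_within :: "'v set set \<Rightarrow> ('k \<Rightarrow> 'v) set \<Rightarrow> bool" where
  "sections_within F E \<longleftrightarrow> (\<forall>\<sigma> u. {y. \<sigma>(u := y) \<in> E} \<in> F)"

lemma sections_within_fun_upd:
  assumes "sections_within F E" "{} \<in> F" "UNIV \<in> F"
  shows "sections_within F {f. f(x := y) \<in> E}"
  unfolding sections_within_def
proof (intro allI)
  fix \<sigma> u
  show "{z. \<sigma>(u := z) \<in> {f. f(x := y) \<in> E}} \<in> F"
  proof (cases "u = x")
    case True
    then show ?thesis
      using assms(2,3) by (cases "\<sigma>(x := y) \<in> E") simp_all
  next
    case False
    then have "{z. \<sigma>(u := z) \<in> {f. f(x := y) \<in> E}} = {z. \<sigma>(x := y, u := z) \<in> E}"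
      by (simp add: fun_upd_twist)
    then show ?thesis
      using assms(1) by (simp add: sections_within_def)
  qed
qed

lemma prob_Pi_pmf_mono_sections:
  fixes p q :: "'k \<Rightarrow> 'v pmf"
  assumes "finite I" "sections_within F E" "{} \<in> F" "UNIV \<in> F"
    and le: "\<And>u X. u \<in> I \<Longrightarrow> X \<in> F \<Longrightarrow> measure_pmf.prob (p u) X \<le> measure_pmf.prob (q u) X"
  shows "measure_pmf.prob (Pi_pmf I d p) E \<le> measure_pmf.prob (Pi_pmf I d q) E"
proof -
  have "emeasure (Pi_pmf I d p) E \<le> emeasure (Pi_pmf I d q) E"
    using assms(1,2) le
  proof (induction I arbitrary: E rule: finite_induct)
    case empty
    then show ?case by simp
  next
    case (insert x I)
    have "emeasure (Pi_pmf (insert x I) d p) E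
            = (\<integral>\<^sup>+y. emeasure (Pi_pmf I d p) {f. f(x := y) \<in> E} \<partial>p x)"
      using insert.hyps by (rule emeasure_Pi_pmf_insert)
    also have "\<dots> \<le> (\<integral>\<^sup>+y. emeasure (Pi_pmf I d q) {f. f(x := y) \<in> E} \<partial>p x)"
      using insert.prems assms(3,4)
      by (intro nn_integral_mono insert.IH sections_within_fun_upd) auto
    also have "\<dots> = (\<integral>\<^sup>+f. emeasure (p x) {y. f(x := y) \<in> E} \<partial>Pi_pmf I d q)"
      by (rule nn_integral_emeasure_fun_upd_swap)
    also have "\<dots> \<le> (\<integral>\<^sup>+f. emeasure (q x) {y. f(x := y) \<in> E} \<partial>Pi_pmf I d q)"
      using insert.prems
      by (intro nn_integral_mono) (auto simp: sections_within_def measure_pmf.emeasure_eq_measure)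
    also have "\<dots> = (\<integral>\<^sup>+y. emeasure (Pi_pmf I d q) {f. f(x := y) \<in> E} \<partial>q x)"
      by (rule nn_integral_emeasure_fun_upd_swap[symmetric])
    also have "\<dots> = emeasure (Pi_pmf (insert x I) d q) E"
      using insert.hyps by (rule emeasure_Pi_pmf_insert[symmetric])
    finally show ?case .
  qed
  then show ?thesis
    by (simp add: measure_pmf.emeasure_eq_measure)
qed

lemma distr_restrict_Pi_pmf:
  assumes "finite J"
  shows "distr (Pi_pmf J d P) (PiM J (\<lambda>u. measure_pmf (P u))) (\<lambda>f. restrict f J)
           = PiM J (\<lambda>u. measure_pmf (P u))"
proof -
  interpret product_prob_space "\<lambda>u. measure_pmf (P u)" J
    by (intro product_prob_spaceI measure_pmf.prob_space_axioms)
  show ?thesis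
  proof (rule PiM_eqI)
    fix A assume A: "\<And>u. u \<in> J \<Longrightarrow> A u \<in> sets (measure_pmf (P u))"
    have "Pi\<^sub>E J A \<in> sets (PiM J (\<lambda>u. measure_pmf (P u)))"
      using A by (intro sets_PiM_I_finite assms) auto
    then have "emeasure (distr (Pi_pmf J d P) (PiM J (\<lambda>u. measure_pmf (P u))) (\<lambda>f. restrict f J))
                 (Pi\<^sub>E J A) = emeasure (Pi_pmf J d P) ((\<lambda>f. restrict f J) -` Pi\<^sub>E J A)"
      by (subst emeasure_distr) (auto simp: space_PiM)
    also have "\<dots> = emeasure (Pi_pmf J d P) (PiE_dflt J d A)"
      by (intro emeasure_eq_AE AE_pmfI) (auto simp: PiE_dflt_def set_Pi_pmf assms)
    also have "\<dots> = (\<Prod>u\<in>J. emeasure (P u) (A u))"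
      by (simp add: measure_pmf.emeasure_eq_measure measure_Pi_pmf_PiE_dflt assms prod_ennreal)
    finally show "emeasure (distr (Pi_pmf J d P) (PiM J (\<lambda>u. measure_pmf (P u))) (\<lambda>f. restrict f J))
                    (Pi\<^sub>E J A) = (\<Prod>u\<in>J. emeasure (P u) (A u))" .
  qed (simp_all add: assms)
qed

lemma extensional_in_sets_PiM_pmf:
  fixes P :: "'k \<Rightarrow> 'v::countable pmf"
  assumes "finite J" "X \<subseteq> extensional J"
  shows "X \<in> sets (PiM J (\<lambda>u. measure_pmf (P u)))"
proof (rule sets.countable)
  have "X \<subseteq> PiE J (\<lambda>_. UNIV)"
    using assms(2) by (auto simp: PiE_def)
  then show "countable X"
    by (rule countable_subset) (intro countable_PiE assms(1) countableI_type)
next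
  fix f assume "f \<in> X"
  then have "{f} = PiE J (\<lambda>u. {f u})"
    using assms(2) PiE_singleton[of f J] by blast
  then show "{f} \<in> sets (PiM J (\<lambda>u. measure_pmf (P u)))"
    by (simp add: sets_PiM_I_finite assms(1))
qed

lemma measure_PiM_pmf_eq_Pi_pmf:
  fixes P :: "'k \<Rightarrow> 'v::countable pmf"
  assumes "finite J"
    and local: "\<And>\<sigma> \<sigma>'. (\<And>u. u \<in> J \<Longrightarrow> \<sigma> u = \<sigma>' u) \<Longrightarrow> \<sigma> \<in> E \<Longrightarrow> \<sigma>' \<in> E"
  shows "measure (PiM UNIV (\<lambda>u. measure_pmf (P u))) E = measure_pmf.prob (Pi_pmf J d P) E"
proof -
  define M where "M = (\<lambda>u. measure_pmf (P u))"
  define X where "X = (\<lambda>\<sigma>. restrict \<sigma> J) ` E"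
  interpret product_prob_space M UNIV
    unfolding M_def by (intro product_prob_spaceI measure_pmf.prob_space_axioms)
  have X: "X \<in> sets (PiM J M)"
    unfolding M_def X_def by (intro extensional_in_sets_PiM_pmf assms(1)) auto
  have restrict_in_X: "restrict \<sigma> J \<in> X \<longleftrightarrow> \<sigma> \<in> E" for \<sigma>
    using local[of _ \<sigma>] by (auto simp: X_def) (metis restrict_apply')
  then have emb: "prod_emb UNIV M J X = E"
    by (auto simp: prod_emb_def M_def)
  have "emeasure (PiM UNIV M) E = emeasure (PiM J M) X"
    using X by (simp flip: emb add: emeasure_PiM_emb' assms(1))
  also have "\<dots> = emeasure (Pi_pmf J d P) ((\<lambda>f. restrict f J) -` X)"
    using X unfolding M_def
    by (subst distr_restrict_Pi_pmf[OF assms(1), of d, symmetric], subst emeasure_distr)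
       (auto simp: space_PiM)
  also have "(\<lambda>f. restrict f J) -` X = E"
    using restrict_in_X by auto
  finally show ?thesis
    by (simp add: measure_def M_def)
qed

lemma rtranclp_sup_edges_from:
  "(\<lambda>x y. R x y \<or> x = u \<and> y \<in> T)\<^sup>*\<^sup>* a b
     \<longleftrightarrow> R\<^sup>*\<^sup>* a b \<or> R\<^sup>*\<^sup>* a u \<and> (\<exists>v\<in>T. R\<^sup>*\<^sup>* v b)"
  (is "?R'\<^sup>*\<^sup>* a b \<longleftrightarrow> _")
proof
  assume "?R'\<^sup>*\<^sup>* a b"
  then show "R\<^sup>*\<^sup>* a b \<or> R\<^sup>*\<^sup>* a u \<and> (\<exists>v\<in>T. R\<^sup>*\<^sup>* v b)"
  proof (induction rule: rtranclp_induct)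
    case (step y z)
    show ?case
    proof (cases "R y z")
      case True
      with step.IH show ?thesis
        by (meson rtranclp.rtrancl_into_rtrancl)
    next
      case False
      with step.hyps(2) have "y = u" "z \<in> T"
        by auto
      with step.IH show ?thesis
        by blast
    qed
  qed simp
next
  have mono: "R\<^sup>*\<^sup>* x y \<Longrightarrow> ?R'\<^sup>*\<^sup>* x y" for x y
    by (erule rtranclp_mono[THEN predicate2D, rotated]) auto
  assume "R\<^sup>*\<^sup>* a b \<or> R\<^sup>*\<^sup>* a u \<and> (\<exists>v\<in>T. R\<^sup>*\<^sup>* v b)"
  then show "?R'\<^sup>*\<^sup>* a b"
  proof (elim disjE conjE bexE)
    fix v assume "R\<^sup>*\<^sup>* a u" "v \<in> T" "R\<^sup>*\<^sup>* v b"
    then have "?R'\<^sup>*\<^sup>* a v"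
      by (blast intro: mono rtranclp.rtrancl_into_rtrancl)
    with \<open>R\<^sup>*\<^sup>* v b\<close> show ?thesis
      by (blast intro: mono rtranclp_trans)
  qed (rule mono)
qed

definition hits :: "'a set \<Rightarrow> 'a set set" where
  "hits A = {S. S \<inter> A \<noteq> {}}"

lemma hits_empty [simp]: "hits {} = {}"
  by (simp add: hits_def)

lemma sections_within_reachable:
  "sections_within (insert UNIV (range hits)) {\<sigma>. \<exists>v\<in>T. (edge \<sigma>)\<^sup>*\<^sup>* a v}"
  unfolding sections_within_def
proof (intro allI)
  fix \<sigma> :: "int \<times> int \<Rightarrow> dir set" and u
  define R where "R = edge (\<sigma>(u := {}))"
  define A where "A = {d. R\<^sup>*\<^sup>* a u \<and> (\<exists>v\<in>T. R\<^sup>*\<^sup>* (u + dir_vec d) v)}"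
  have edge_upd: "edge (\<sigma>(u := S)) = (\<lambda>x y. R x y \<or> x = u \<and> y \<in> (\<lambda>d. u + dir_vec d) ` S)" for S
    by (auto simp: fun_eq_iff R_def edge_def)
  have slice: "{S. \<sigma>(u := S) \<in> {\<sigma>. \<exists>v\<in>T. (edge \<sigma>)\<^sup>*\<^sup>* a v}}
                 = {S. (\<exists>v\<in>T. R\<^sup>*\<^sup>* a v) \<or> S \<in> hits A}"
    unfolding mem_Collect_eq edge_upd rtranclp_sup_edges_from by (auto simp: A_def hits_def)
  show "{S. \<sigma>(u := S) \<in> {\<sigma>. \<exists>v\<in>T. (edge \<sigma>)\<^sup>*\<^sup>* a v}} \<in> insert UNIV (range hits)"
    unfolding slice by (cases "\<exists>v\<in>T. R\<^sup>*\<^sup>* a v") simp_all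
qed

lemma l1norm_add_dir_vec: "l1norm (u + dir_vec d) \<le> l1norm u + 1"
  by (cases u; cases d) (auto simp: l1norm_def dir_vec_def)

lemma finite_l1norm_le: "finite {u. l1norm u \<le> k}"
proof (rule finite_subset)
  show "{u. l1norm u \<le> k} \<subseteq> {-k..k} \<times> {-k..k}"
    by (auto simp: l1norm_def)
qed simp

lemma reaches_boundary_cong:
  assumes agree: "\<And>u. l1norm u \<le> int n \<Longrightarrow> \<sigma> u = \<sigma>' u"
    and "\<sigma> \<in> reaches_boundary n"
  shows "\<sigma>' \<in> reaches_boundary n"
proof -
  have "(edge \<sigma>')\<^sup>*\<^sup>* (0, 0) w \<and> l1norm w \<le> int n \<or> \<sigma>' \<in> reaches_boundary n"
    if "(edge \<sigma>)\<^sup>*\<^sup>* (0, 0) w" for w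
    using that
  proof (induction rule: rtranclp_induct)
    case base
    then show ?case by (simp add: l1norm_def)
  next
    case (step y z)
    from step.IH show ?case
    proof
      assume y: "(edge \<sigma>')\<^sup>*\<^sup>* (0, 0) y \<and> l1norm y \<le> int n"
      with agree step.hyps(2) have "edge \<sigma>' y z"
        by (simp add: edge_def)
      with y have z: "(edge \<sigma>')\<^sup>*\<^sup>* (0, 0) z"
        by (meson rtranclp.rtrancl_into_rtrancl)
      show ?case
      proof (cases "l1norm z \<le> int n")
        case False
        from step.hyps(2) have "l1norm z \<le> l1norm y + 1"
          by (auto simp: edge_def l1norm_add_dir_vec)
        with False y have "z \<in> boundary n"
          by (simp add: boundary_def)
        with z show ?thesis
          by (auto simp: reaches_boundary_def)
      qed (use z in simp)
    qed simp
  qed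
  moreover obtain v where v: "v \<in> boundary n" "(edge \<sigma>)\<^sup>*\<^sup>* (0, 0) v"
    using assms(2) by (auto simp: reaches_boundary_def)
  ultimately have "(edge \<sigma>')\<^sup>*\<^sup>* (0, 0) v \<and> l1norm v \<le> int n \<or> \<sigma>' \<in> reaches_boundary n"
    by blast
  with v(1) show ?thesis
    by (simp add: boundary_def)
qed

instance dir :: finite
  by standard (simp add: UNIV_dir)

lemma card_Compl_dir:
  "card (- A) = of_bool (North \<notin> A) + of_bool (South \<notin> A)
                + of_bool (East \<notin> A) + of_bool (West \<notin> A)"
proof -
  have "card (- A) = (\<Sum>d\<in>UNIV. if d \<in> A then 0 else 1)"
    by (simp add: Compl_eq_Diff_UNIV sum.If_cases)
  then show ?thesis
    by (simp add: UNIV_dir)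
qed

lemma prob_iid_half_hits:
  "measure_pmf.prob (iid_law (1/2)) (hits A) = 1 - 2 ^ card (- A) / 16"
proof -
  have uniform: "iid_law (1/2) = pmf_of_set (UNIV :: dir set set)"
    using pmf_of_set_Pow_conv_bernoulli[of "UNIV :: dir set" False] by (simp add: iid_law_def)
  have "hits A = UNIV - Pow (- A)"
    by (auto simp: hits_def)
  then have "measure_pmf.prob (iid_law (1/2)) (hits A)
              = 1 - measure_pmf.prob (iid_law (1/2)) (Pow (- A))"
    using measure_pmf.prob_compl[of "Pow (- A)" "iid_law (1/2)"] by simp
  also have "measure_pmf.prob (iid_law (1/2)) (Pow (- A)) = 2 ^ card (- A) / 16"
    by (simp add: uniform measure_pmf_of_set card_UNIV_set card_Pow UNIV_dir)
  finally show ?thesis .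
qed

lemma pmf_corner_stick:
  assumes "0 \<le> \<alpha>" "\<alpha> \<le> 1/4"
  shows "pmf (corner_stick \<alpha>) S
           = \<alpha> * indicator corner_pairs S + (1 - 4 * \<alpha>) / 2 * indicator stick_pairs S"
proof -
  define w where "w S = \<alpha> * indicator corner_pairs S + (1 - 4 * \<alpha>) / 2 * indicator stick_pairs S"
    for S :: "dir set"
  have disjoint: "corner_pairs \<inter> stick_pairs = {}"
    by (auto simp: corner_pairs_def stick_pairs_def doubleton_eq_iff)
  have law: "corner_stick \<alpha> = embed_pmf w"
    unfolding corner_stick_def
    by (rule arg_cong[where f = embed_pmf]) (use disjoint in \<open>auto simp: fun_eq_iff w_def\<close>)
  have nonneg: "0 \<le> w S" for S
    using assms by (simp add: w_def)
  have "(\<integral>\<^sup>+S. ennreal (w S) \<partial>count_space UNIV)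
          = (\<Sum>S\<in>corner_pairs \<union> stick_pairs. ennreal (w S))"
    by (rule nn_integral_count_space') (auto simp: w_def)
  also have "\<dots> = ennreal (\<Sum>S\<in>corner_pairs \<union> stick_pairs. w S)"
    using nonneg by simp
  also have "(\<Sum>S\<in>corner_pairs \<union> stick_pairs. w S)
               = (\<Sum>S\<in>corner_pairs. w S) + (\<Sum>S\<in>stick_pairs. w S)"
    using disjoint by (intro sum.union_disjoint) (auto simp: corner_pairs_def stick_pairs_def)
  also have "\<dots> = (\<Sum>S\<in>corner_pairs. \<alpha>) + (\<Sum>S\<in>stick_pairs. (1 - 4 * \<alpha>) / 2)"
    using disjoint by (intro arg_cong2[where f = "(+)"] sum.cong) (auto simp: w_def indicator_def)
  also have "\<dots> = 1"
    by (simp add: corner_pairs_def stick_pairs_def doubleton_eq_iff diff_divide_distrib)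
  finally show ?thesis
    using nonneg by (simp add: law pmf_embed_pmf w_def)
qed

lemma prob_corner_stick_hits:
  assumes "0 \<le> \<alpha>" "\<alpha> \<le> 1/4"
  shows "measure_pmf.prob (corner_stick \<alpha>) (hits A)
           = \<alpha> * (of_bool (North \<in> A \<or> East \<in> A) + of_bool (North \<in> A \<or> West \<in> A)
                  + of_bool (South \<in> A \<or> East \<in> A) + of_bool (South \<in> A \<or> West \<in> A))
             + (1 - 4 * \<alpha>) / 2
               * (of_bool (North \<in> A \<or> South \<in> A) + of_bool (East \<in> A \<or> West \<in> A))"
    (is "_ = ?rhs")
proof -
  have "measure_pmf.prob (corner_stick \<alpha>) (hits A) = (\<Sum>S\<in>hits A. pmf (corner_stick \<alpha>) S)"
    by (simp add: measure_measure_pmf_finite)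
  also have "\<dots> = \<alpha> * (\<Sum>S\<in>corner_pairs. indicator (hits A) S)
                  + (1 - 4 * \<alpha>) / 2 * (\<Sum>S\<in>stick_pairs. indicator (hits A) S)"
  proof -
    have swap: "(\<Sum>S\<in>hits A. indicator X S) = (\<Sum>S\<in>X. indicator (hits A) S :: real)" for X
      by (simp add: indicator_def sum.If_cases Int_commute)
    show ?thesis
      by (simp only: pmf_corner_stick[OF assms] sum.distrib sum_distrib_left[symmetric] swap)
  qed
  also have "\<dots> = ?rhs"
    by (simp add: corner_pairs_def stick_pairs_def doubleton_eq_iff hits_def indicator_def)
  finally show ?thesis .
qed

lemma prob_hits_iid_half_le_corner_stick:
  assumes "1/8 \<le> \<alpha>" "\<alpha> \<le> 1/4"
  shows "measure_pmf.prob (iid_law (1/2)) (hits A) \<le> measure_pmf.prob (corner_stick \<alpha>) (hits A)"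
proof -
  have "0 \<le> \<alpha>"
    using assms(1) by simp
  with assms show ?thesis
    unfolding prob_iid_half_hits prob_corner_stick_hits[OF \<open>0 \<le> \<alpha>\<close> assms(2)] card_Compl_dir
    by (cases "North \<in> A"; cases "South \<in> A"; cases "East \<in> A"; cases "West \<in> A")
       (simp_all add: diff_divide_distrib)
qed

lemma measure_product_law_reaches_boundary_mono:
  assumes "\<And>A. measure_pmf.prob p (hits A) \<le> measure_pmf.prob q (hits A)"
  shows "measure (product_law p) (reaches_boundary n) \<le> measure (product_law q) (reaches_boundary n)"
proof -
  define ball where "ball = {u. l1norm u \<le> int n}"
  have "finite ball"
    by (simp add: ball_def finite_l1norm_le)
  have local: "\<And>\<sigma> \<sigma>'. (\<And>u. u \<in> ball \<Longrightarrow> \<sigma> u = \<sigma>' u) \<Longrightarrow> \<sigma> \<in> reaches_boundary n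
                 \<Longrightarrow> \<sigma>' \<in> reaches_boundary n"
    unfolding ball_def mem_Collect_eq by (fact reaches_boundary_cong)
  have product_law_eq: "measure (product_law P) (reaches_boundary n)
                          = measure_pmf.prob (Pi_pmf ball {} (\<lambda>_. P)) (reaches_boundary n)" for P
    unfolding product_law_def by (rule measure_PiM_pmf_eq_Pi_pmf[OF \<open>finite ball\<close> local])
  have "measure_pmf.prob (Pi_pmf ball {} (\<lambda>_. p)) (reaches_boundary n)
          \<le> measure_pmf.prob (Pi_pmf ball {} (\<lambda>_. q)) (reaches_boundary n)"
  proof (rule prob_Pi_pmf_mono_sections)
    show "sections_within (insert UNIV (range hits)) (reaches_boundary n)"
      unfolding reaches_boundary_def by (rule sections_within_reachable)
    show "{} \<in> insert UNIV (range hits)"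
      by (metis hits_empty insertI2 rangeI)
    show "measure_pmf.prob p X \<le> measure_pmf.prob q X" if "X \<in> insert UNIV (range hits)" for X
      using that assms by auto
  qed (simp_all add: \<open>finite ball\<close>)
  then show ?thesis
    by (simp only: product_law_eq)
qed

theorem mainTheorem14:
  fixes \<alpha> :: real
  assumes "1/8 \<le> \<alpha>" and "\<alpha> \<le> 1/4"
  shows "(\<forall>A :: dir set. measure_pmf.prob (iid_law (1/2)) {S. S \<inter> A \<noteq> {}}
            \<le> measure_pmf.prob (corner_stick \<alpha>) {S. S \<inter> A \<noteq> {}})
         \<and> (\<forall>n :: nat. measure (product_law (iid_law (1/2))) (reaches_boundary n)
            \<le> measure (product_law (corner_stick \<alpha>)) (reaches_boundary n))"
proof (intro conjI allI)
  fix A :: "dir set"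
  show "measure_pmf.prob (iid_law (1/2)) {S. S \<inter> A \<noteq> {}}
          \<le> measure_pmf.prob (corner_stick \<alpha>) {S. S \<inter> A \<noteq> {}}"
    using prob_hits_iid_half_le_corner_stick[OF assms] by (simp only: hits_def)
next
  fix n :: nat
  show "measure (product_law (iid_law (1/2))) (reaches_boundary n)
          \<le> measure (product_law (corner_stick \<alpha>)) (reaches_boundary n)"
    by (intro measure_product_law_reaches_boundary_mono prob_hits_iid_half_le_corner_stick assms)
qed

end
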